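(* If $S$ is a nondegenerate $n$-dimensional simplex with $S\subset B_n$, then $\xi(B_n;S)\ge n$, and $\xi(B_n;S)=n$ holds if and only if $S$ is a regular simplex inscribed into $B_n$. Consequently $\xi_n(B_n)=n$.
   Context: $B_n$ is the closed unit Euclidean ball in $\mathbb R^n$ centered at $0$. $\xi(B_n;S)$ is the minimal $\sigma\ge1$ with $B_n\subset\sigma S$, where $\sigma S$ is the homothetic image of $S$ with center at its center of gravity and ratio $\sigma$. $\xi_n(B_n)$ is the minimum of $\xi(B_n;S)$ over all nondegenerate $n$-dimensional simplices $S\subset B_n$. A simplex is inscribed into $B_n$ if all its vertices lie on the unit sphere. *)

theory Defs
  imports "HOL-Analysis.Analysis"
begin

definition simplex_vertices :: "'a::euclidean_space set \<Rightarrow> 'a set" where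
  "simplex_vertices S = {x. x extreme_point_of S}"

definition simplex_center :: "'a::euclidean_space set \<Rightarrow> 'a" where
  "simplex_center S = (1 / real (card (simplex_vertices S))) *\<^sub>R (\<Sum>x\<in>simplex_vertices S. x)"

definition homothetic_simplex :: "real \<Rightarrow> 'a::euclidean_space set \<Rightarrow> 'a set" where
  "homothetic_simplex \<sigma> S = (\<lambda>x. simplex_center S + \<sigma> *\<^sub>R (x - simplex_center S)) ` S"

definition absorption_index :: "'a::euclidean_space set \<Rightarrow> 'a set \<Rightarrow> real" where
  "absorption_index B S = Inf {\<sigma>. 1 \<le> \<sigma> \<and> B \<subseteq> homothetic_simplex \<sigma> S}"

definition nondeg_simplex :: "'a::euclidean_space set \<Rightarrow> bool" where
  "nondeg_simplex S \<longleftrightarrow> (int DIM('a)) simplex S"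

definition xi_n_ball :: "'a::euclidean_space itself \<Rightarrow> real" where
  "xi_n_ball _ = Inf {absorption_index (cball (0::'a) 1) S | S. nondeg_simplex S \<and> S \<subseteq> cball 0 1}"

definition regular_simplex :: "'a::euclidean_space set \<Rightarrow> bool" where
  "regular_simplex S \<longleftrightarrow> (\<exists>d. \<forall>x\<in>simplex_vertices S. \<forall>y\<in>simplex_vertices S. x \<noteq> y \<longrightarrow> dist x y = d)"

definition inscribed_in_ball :: "'a::euclidean_space set \<Rightarrow> bool" where
  "inscribed_in_ball S \<longleftrightarrow> simplex_vertices S \<subseteq> sphere 0 1"

end

theory Submission imports Defs begin

text \<open>
  For a simplex with vertex set \<open>C\<close> pick vectors \<open>a j\<close> with \<open>a j \<bullet> (i - j) = -1\<close> for all
  vertices \<open>i \<noteq> j\<close>; then \<open>1 + a j \<bullet> (p - j)\<close> is the \<open>j\<close>-th barycentric coordinate of \<open>p\<close>.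
  With \<open>N = n + 1\<close> vertices and center \<open>c\<close>, the ball lies in \<open>\<sigma>S\<close> exactly when
  \<open>\<sigma> \<ge> N (\<parallel>a j\<parallel> + a j \<bullet> c)\<close> for every \<open>j\<close>. These \<open>N\<close> numbers sum to
  \<open>N \<Sum>\<parallel>a j\<parallel>\<close>, and evaluating the coordinates at \<open>0\<close> gives \<open>\<Sum> a j \<bullet> j = N - 1\<close>; since
  \<open>a j \<bullet> j \<le> \<parallel>a j\<parallel>\<close> for vertices in the ball, their maximum is at least \<open>N - 1 = n\<close>.
  Equality forces equality in every Cauchy-Schwarz step, i.e. unit vertices with
  \<open>a j\<close> parallel to \<open>j\<close>, and then all inner products of distinct vertices agree.
  Conversely, for unit vertices with equal mutual inner products the \<open>a j\<close> are multiples of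
  the vertices and all \<open>N\<close> numbers equal \<open>n\<close>.
\<close>

definition dual_family :: "'a::euclidean_space set \<Rightarrow> ('a \<Rightarrow> 'a) \<Rightarrow> bool" where
  "dual_family C a \<longleftrightarrow> (\<forall>j\<in>C. \<forall>i\<in>C. i \<noteq> j \<longrightarrow> a j \<bullet> (i - j) = -1)"

definition barycentric :: "('a::euclidean_space \<Rightarrow> 'a) \<Rightarrow> 'a \<Rightarrow> 'a \<Rightarrow> real" where
  "barycentric a j p = 1 + a j \<bullet> (p - j)"

lemma dual_family_exists:
  fixes C :: "'a::euclidean_space set"
  assumes "\<not> affine_dependent C"
  shows "\<exists>a. dual_family C a"
proof -
  have "\<exists>w. \<forall>i\<in>C. i \<noteq> j \<longrightarrow> w \<bullet> (i - j) = -1" if "j \<in> C" for j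
  proof -
    have "independent ((\<lambda>x. -j + x) ` (C - {j}))"
      using affine_dependent_iff_dependent2[OF that] assms by simp
    from real_vector.linear_independent_extend[OF this, of "\<lambda>_. -1::real"]
    obtain g :: "'a \<Rightarrow> real" where g: "linear g" "\<forall>x\<in>(\<lambda>x. -j + x) ` (C - {j}). g x = -1"
      by auto
    have "adjoint g 1 \<bullet> (i - j) = -1" if "i \<in> C" "i \<noteq> j" for i
      using g that adjoint_clauses(2)[OF g(1), of 1 "i - j"] by auto
    then show ?thesis by blast
  qed
  then have "\<forall>j\<in>C. \<exists>w. \<forall>i\<in>C. i \<noteq> j \<longrightarrow> w \<bullet> (i - j) = -1" by blast
  then show ?thesis
    unfolding dual_family_def by (rule bchoice)
qed

lemma barycentric_affine_combination:
  assumes "dual_family C a" "finite C" "j \<in> C" "sum \<mu> C = 1"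
  shows "barycentric a j (\<Sum>i\<in>C. \<mu> i *\<^sub>R i) = \<mu> j"
proof -
  have "(\<Sum>i\<in>C. \<mu> i *\<^sub>R i) - j = (\<Sum>i\<in>C. \<mu> i *\<^sub>R (i - j))"
    using assms(4) by (simp add: scaleR_diff_right sum_subtractf scaleR_sum_left[symmetric])
  then have "a j \<bullet> ((\<Sum>i\<in>C. \<mu> i *\<^sub>R i) - j) = (\<Sum>i\<in>C. \<mu> i * (a j \<bullet> (i - j)))"
    by (simp add: inner_sum_right)
  also have "\<dots> = (\<Sum>i\<in>C. if i = j then 0 else - \<mu> i)"
    using assms(1,3) unfolding dual_family_def by (intro sum.cong) auto
  also have "\<dots> = - (\<Sum>i\<in>C - {j}. \<mu> i)"
    using assms(2) by (simp add: sum.If_cases sum_negf Diff_eq Int_commute)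
  also have "\<dots> = \<mu> j - 1"
    using assms by (simp add: sum_diff1)
  finally show ?thesis unfolding barycentric_def by simp
qed

lemma barycentric_representation:
  fixes C :: "'a::euclidean_space set"
  assumes "dual_family C a" "finite C" "affine hull C = UNIV"
  shows "(\<Sum>j\<in>C. barycentric a j p) = 1" "(\<Sum>j\<in>C. barycentric a j p *\<^sub>R j) = p"
proof -
  have "p \<in> affine hull C" using assms(3) by simp
  then obtain \<mu> where \<mu>: "sum \<mu> C = 1" "(\<Sum>i\<in>C. \<mu> i *\<^sub>R i) = p"
    using affine_hull_finite[OF assms(2)] by auto
  have "barycentric a j p = \<mu> j" if "j \<in> C" for j
    using barycentric_affine_combination[OF assms(1,2) that \<mu>(1)] \<mu>(2) by simp
  then show "(\<Sum>j\<in>C. barycentric a j p) = 1" "(\<Sum>j\<in>C. barycentric a j p *\<^sub>R j) = p"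
    using \<mu> by (auto intro: sum.cong)
qed

text \<open>An affine dependence \<open>\<Sum> U v *\<^sub>R v = 0\<close> with \<open>\<Sum> U v = 0\<close> can be added to the trivial
  representation of a vertex \<open>j\<close>; the \<open>j\<close>-th coordinate shows \<open>U j = 0\<close>.\<close>
lemma dual_family_imp_affine_independent:
  fixes C :: "'a::euclidean_space set"
  assumes fin: "finite C" and dual: "dual_family C a"
  shows "\<not> affine_dependent C"
proof
  assume "affine_dependent C"
  then obtain U where U: "sum U C = 0" "\<exists>v\<in>C. U v \<noteq> 0" "(\<Sum>v\<in>C. U v *\<^sub>R v) = 0"
    using affine_dependent_explicit_finite[OF fin] by blast
  have "U j = 0" if j: "j \<in> C" for j
  proof -
    define \<mu> where "\<mu> v = U v + (if v = j then 1 else 0)" for v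
    have "(\<Sum>v\<in>C. \<mu> v *\<^sub>R v) = (\<Sum>v\<in>C. U v *\<^sub>R v) + (\<Sum>v\<in>C. (if v = j then 1 else 0) *\<^sub>R v)"
      unfolding \<mu>_def by (simp add: scaleR_add_left sum.distrib)
    also have "(\<Sum>v\<in>C. (if v = j then 1 else 0) *\<^sub>R v) = (\<Sum>v\<in>C. if v = j then j else 0)"
      by (intro sum.cong) auto
    also have "(\<Sum>v\<in>C. U v *\<^sub>R v) + (\<Sum>v\<in>C. if v = j then j else 0) = j"
      using U(3) fin j by simp
    finally have "(\<Sum>v\<in>C. \<mu> v *\<^sub>R v) = j" .
    moreover have "sum \<mu> C = 1" unfolding \<mu>_def using fin j U(1) by (simp add: sum.distrib)
    ultimately have "barycentric a j j = \<mu> j"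
      using barycentric_affine_combination[OF dual fin j, of \<mu>] by simp
    then show ?thesis unfolding barycentric_def \<mu>_def by simp
  qed
  then show False using U(2) by blast
qed

lemma dual_family_unit_vertices:
  assumes "\<forall>x\<in>C. norm x = 1" "\<forall>x\<in>C. \<forall>y\<in>C. x \<noteq> y \<longrightarrow> x \<bullet> y = t" "t \<noteq> 1"
  shows "dual_family C (\<lambda>j. (1 / (1 - t)) *\<^sub>R j)"
  unfolding dual_family_def
proof (intro ballI impI)
  fix j i assume "j \<in> C" "i \<in> C" "i \<noteq> j"
  then have "j \<bullet> (i - j) = t - 1" using assms(1,2) by (auto simp: inner_diff_right dot_square_norm)
  moreover have "(t - 1) / (1 - t) = -1" using assms(3) by (simp add: divide_eq_eq)
  ultimately show "(1 / (1 - t)) *\<^sub>R j \<bullet> (i - j) = -1" by simp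
qed

lemma dist_unit_vectors_power2:
  fixes x y :: "'a::real_inner"
  assumes "norm x = 1" "norm y = 1"
  shows "(dist x y)\<^sup>2 = 2 - 2 * (x \<bullet> y)"
proof -
  have "(dist x y)\<^sup>2 = x \<bullet> x - 2 * (x \<bullet> y) + y \<bullet> y"
    unfolding dist_norm power2_norm_eq_inner
    by (simp add: inner_diff_left inner_diff_right inner_commute)
  then show ?thesis using assms by (simp add: dot_square_norm)
qed

lemma unit_if_inner_eq_norm:
  fixes x v :: "'a::real_inner"
  assumes "norm x \<le> 1" "v \<noteq> 0" "v \<bullet> x = norm v"
  shows "norm x = 1" "v = norm v *\<^sub>R x"
proof -
  have "norm v \<le> norm v * norm x"
    using norm_cauchy_schwarz[of v x] assms(3) by simp
  then show x1: "norm x = 1" using assms(1,2) by simp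
  then have "v \<bullet> x = norm v * norm x" using assms(3) by simp
  then have "norm v *\<^sub>R x = norm x *\<^sub>R v" by (simp add: norm_cauchy_schwarz_eq)
  then show "v = norm v *\<^sub>R x" using x1 by simp
qed

locale simplex_frame =
  fixes C :: "'a::euclidean_space set" and a :: "'a \<Rightarrow> 'a"
  assumes indep: "\<not> affine_dependent C"
    and card_vertices: "card C = DIM('a) + 1"
    and dual: "dual_family C a"
begin

lemma finite_vertices: "finite C"
  using card_vertices card_ge_0_finite by force

lemma affine_hull_vertices: "affine hull C = UNIV"
proof -
  have "of_nat (card C) = aff_dim C + 1" using aff_dim_affine_independent[OF indep] .
  then have "aff_dim C = DIM('a)" using card_vertices by simp
  then show ?thesis using aff_dim_eq_full by blast
qed

lemma simplex_vertices_eq: "simplex_vertices (convex hull C) = C"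
  unfolding simplex_vertices_def
  using extreme_point_of_convex_hull_affine_independent[OF indep] by auto

lemma vertices_nonempty: "C \<noteq> {}"
  using card_vertices by auto

lemma other_vertex_exists:
  assumes "j \<in> C"
  obtains i where "i \<in> C" "i \<noteq> j"
proof -
  have "\<not> C \<subseteq> {j}"
  proof
    assume "C \<subseteq> {j}"
    then have "card C \<le> 1" using card_mono[of "{j}" C] by simp
    then show False using card_vertices DIM_positive[where 'a='a] by simp
  qed
  then show ?thesis using that by blast
qed

lemma dual_nonzero: "j \<in> C \<Longrightarrow> a j \<noteq> 0"
  by (metis dual dual_family_def inner_zero_left other_vertex_exists zero_neq_neg_one)

definition N :: real where "N = real (card C)"

definition center :: 'a where "center = simplex_center (convex hull C)"

lemma N_ge_2: "N \<ge> 2"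
  unfolding N_def using card_vertices DIM_positive[where 'a='a] by linarith

lemma center_eq: "center = (\<Sum>i\<in>C. (1/N) *\<^sub>R i)"
  unfolding center_def simplex_center_def simplex_vertices_eq N_def
  by (simp add: scaleR_sum_right)

lemma barycentric_center: "j \<in> C \<Longrightarrow> barycentric a j center = 1/N"
  using barycentric_affine_combination[OF dual finite_vertices, of j "\<lambda>_. 1/N"] N_ge_2
  by (simp add: center_eq N_def)

lemma barycentric_nonneg:
  assumes "j \<in> C" "x \<in> convex hull C"
  shows "barycentric a j x \<ge> 0"
proof -
  obtain u where u: "\<forall>x\<in>C. 0 \<le> u x" "sum u C = 1" "(\<Sum>x\<in>C. u x *\<^sub>R x) = x"
    using assms(2) convex_hull_finite[OF finite_vertices] by auto
  have "barycentric a j x = u j"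
    using barycentric_affine_combination[OF dual finite_vertices assms(1) u(2)] u(3) by simp
  then show ?thesis using u(1) assms(1) by simp
qed

lemma barycentric_center_shift: "barycentric a j (center + v) = barycentric a j center + a j \<bullet> v"
  unfolding barycentric_def by (simp add: algebra_simps inner_diff_right inner_add_right)

text \<open>The \<open>j\<close>-th facet of \<open>\<sigma> S\<close> supports the unit ball exactly for \<open>\<sigma> = support_ratio j\<close>.\<close>
definition support_ratio :: "'a \<Rightarrow> real" where
  "support_ratio j = N * (norm (a j) + a j \<bullet> center)"

lemma support_ratio_le_if_cball_subset:
  assumes "\<sigma> > 0" and cover: "cball 0 1 \<subseteq> homothetic_simplex \<sigma> (convex hull C)"
  and j: "j \<in> C"
  shows "support_ratio j \<le> \<sigma>"
proof -
  define y where "y = - (1 / norm (a j)) *\<^sub>R a j"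
  have "y \<in> cball 0 1" using dual_nonzero[OF j] unfolding y_def by simp
  then obtain x where x: "x \<in> convex hull C" "y = center + \<sigma> *\<^sub>R (x - center)"
    using cover unfolding homothetic_simplex_def center_def by auto
  have "a j \<bullet> (x - center) \<ge> - 1/N"
    using barycentric_center_shift[of j "x - center"] barycentric_nonneg[OF j x(1)]
      barycentric_center[OF j] by simp
  then have "\<sigma> * (a j \<bullet> (x - center)) \<ge> - \<sigma>/N"
    using mult_left_mono[of "- 1/N" _ \<sigma>] assms by simp
  moreover have "a j \<bullet> (y - center) = \<sigma> * (a j \<bullet> (x - center))" using x(2) by simp
  moreover have "a j \<bullet> y = - norm (a j)" unfolding y_def using dual_nonzero[OF j]
    by (simp add: power2_norm_eq_inner[symmetric] power2_eq_square)
  ultimately have "- norm (a j) - a j \<bullet> center \<ge> - \<sigma>/N" by (simp add: inner_diff_right)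
  then show "support_ratio j \<le> \<sigma>"
    unfolding support_ratio_def using N_ge_2 by (simp add: field_simps)
qed

lemma cball_subset_homothetic_if_support_ratio_le:
  assumes "\<sigma> > 0" and ratio: "\<forall>j\<in>C. support_ratio j \<le> \<sigma>"
  shows "cball 0 1 \<subseteq> homothetic_simplex \<sigma> (convex hull C)"
proof
  fix y :: 'a assume y: "y \<in> cball 0 1"
  define x where "x = center + (1/\<sigma>) *\<^sub>R (y - center)"
  have "barycentric a j x \<ge> 0" if j: "j \<in> C" for j
  proof -
    have "a j \<bullet> y \<ge> - norm (a j)"
      using Cauchy_Schwarz_ineq2[of "a j" y] mult_left_le[of "norm y" "norm (a j)"] y
      by (simp add: abs_le_iff)
    then have "a j \<bullet> (y - center) \<ge> - support_ratio j / N"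
      unfolding support_ratio_def using N_ge_2 by (simp add: inner_diff_right)
    moreover have "support_ratio j / N \<le> \<sigma> / N"
      using ratio j N_ge_2 by (intro divide_right_mono) auto
    ultimately have "(1/\<sigma>) * (a j \<bullet> (y - center)) \<ge> - 1/N"
      using assms by (simp add: field_simps)
    then show ?thesis
      unfolding x_def barycentric_center_shift barycentric_center[OF j] by simp
  qed
  then have "x \<in> convex hull C"
    unfolding convex_hull_finite[OF finite_vertices] mem_Collect_eq
    using barycentric_representation[OF dual finite_vertices affine_hull_vertices, of x]
    by (intro exI[of _ "\<lambda>j. barycentric a j x"]) auto
  moreover have "y = center + \<sigma> *\<^sub>R (x - center)" unfolding x_def using assms by simp
  ultimately show "y \<in> homothetic_simplex \<sigma> (convex hull C)"
    unfolding homothetic_simplex_def center_def[symmetric] by blast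
qed

lemma cball_subset_homothetic_iff:
  assumes "\<sigma> > 0"
  shows "cball 0 1 \<subseteq> homothetic_simplex \<sigma> (convex hull C) \<longleftrightarrow> (\<forall>j\<in>C. support_ratio j \<le> \<sigma>)"
  using support_ratio_le_if_cball_subset cball_subset_homothetic_if_support_ratio_le assms by blast

lemma absorption_index_eq:
  "absorption_index (cball 0 1) (convex hull C) = max 1 (Max (support_ratio ` C))"
proof -
  have "1 \<le> \<sigma> \<and> cball 0 1 \<subseteq> homothetic_simplex \<sigma> (convex hull C) \<longleftrightarrow>
      max 1 (Max (support_ratio ` C)) \<le> \<sigma>" for \<sigma>
  proof (cases "1 \<le> \<sigma>")
    case True
    then show ?thesis using cball_subset_homothetic_iff[of \<sigma>] finite_vertices vertices_nonempty
      by (auto simp: Max_le_iff)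
  qed simp
  then have "{\<sigma>. 1 \<le> \<sigma> \<and> cball 0 1 \<subseteq> homothetic_simplex \<sigma> (convex hull C)} =
      {max 1 (Max (support_ratio ` C))..}"
    by auto
  then show ?thesis unfolding absorption_index_def by simp
qed

lemma sum_inner_dual_vertex: "(\<Sum>j\<in>C. a j \<bullet> j) = N - 1"
proof -
  have "(\<Sum>j\<in>C. barycentric a j 0) = 1"
    using barycentric_representation(1)[OF dual finite_vertices affine_hull_vertices] .
  then show ?thesis unfolding barycentric_def N_def by (simp add: sum_subtractf)
qed

lemma inner_dual_center: "j \<in> C \<Longrightarrow> a j \<bullet> center = 1/N - 1 + a j \<bullet> j"
  using barycentric_center[of j] unfolding barycentric_def by (simp add: inner_diff_right)

lemma sum_support_ratio: "(\<Sum>j\<in>C. support_ratio j) = N * (\<Sum>j\<in>C. norm (a j))"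
proof -
  have "(\<Sum>j\<in>C. a j \<bullet> center) = (\<Sum>j\<in>C. 1/N - 1 + a j \<bullet> j)"
    using inner_dual_center by (intro sum.cong) auto
  also have "\<dots> = N * (1/N - 1) + (N - 1)"
    using sum_inner_dual_vertex unfolding N_def by (simp add: sum.distrib)
  also have "\<dots> = 0" using N_ge_2 by (simp add: field_simps)
  finally show ?thesis
    unfolding support_ratio_def by (simp add: sum_distrib_left[symmetric] sum.distrib)
qed

lemma inner_dual_vertex_le_norm: "C \<subseteq> cball 0 1 \<Longrightarrow> j \<in> C \<Longrightarrow> a j \<bullet> j \<le> norm (a j)"
  using norm_cauchy_schwarz[of "a j" j] mult_left_le[of "norm j" "norm (a j)"] by auto

lemma sum_norm_dual_ge:
  assumes "C \<subseteq> cball 0 1"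
  shows "(\<Sum>j\<in>C. norm (a j)) \<ge> N - 1"
  using sum_mono[of C "\<lambda>j. a j \<bullet> j" "\<lambda>j. norm (a j)"] inner_dual_vertex_le_norm[OF assms]
    sum_inner_dual_vertex by simp

lemma absorption_index_ge:
  assumes "C \<subseteq> cball 0 1"
  shows "absorption_index (cball 0 1) (convex hull C) \<ge> N - 1"
proof -
  have "N * (N - 1) \<le> (\<Sum>j\<in>C. support_ratio j)"
    using sum_support_ratio sum_norm_dual_ge[OF assms] N_ge_2 by simp
  also have "\<dots> \<le> N * Max (support_ratio ` C)"
    using sum_mono[of C support_ratio "\<lambda>_. Max (support_ratio ` C)"] finite_vertices
    unfolding N_def by simp
  finally show ?thesis
    unfolding absorption_index_eq using N_ge_2 by simp
qed

text \<open>In the equality case the sum of the support ratios attains its lower bound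
  \<open>N (N - 1)\<close> while every term is at most \<open>N - 1\<close>.\<close>
lemma equality_case_conditions:
  assumes sub: "C \<subseteq> cball 0 1" and eq: "absorption_index (cball 0 1) (convex hull C) = N - 1"
  shows "\<forall>j\<in>C. support_ratio j = N - 1 \<and> a j \<bullet> j = norm (a j)"
proof -
  have le: "support_ratio j \<le> N - 1" if "j \<in> C" for j
  proof -
    have "support_ratio j \<le> Max (support_ratio ` C)" using finite_vertices that by simp
    then show ?thesis using eq unfolding absorption_index_eq by linarith
  qed
  have "(\<Sum>j\<in>C. (N - 1) - support_ratio j) = N * (N - 1) - N * (\<Sum>j\<in>C. norm (a j))"
    unfolding sum_subtractf sum_support_ratio by (simp add: N_def algebra_simps)
  also have "\<dots> \<le> 0"
    using sum_norm_dual_ge[OF sub] N_ge_2 by (simp add: mult_left_mono)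
  finally have "(\<Sum>j\<in>C. (N - 1) - support_ratio j) \<le> 0" .
  moreover have "(\<Sum>j\<in>C. (N - 1) - support_ratio j) \<ge> 0" using le by (intro sum_nonneg) simp
  ultimately have "\<forall>j\<in>C. (N - 1) - support_ratio j = 0"
    using sum_nonneg_eq_0_iff[OF finite_vertices, of "\<lambda>j. (N - 1) - support_ratio j"] le by simp
  then have ratio: "\<forall>j\<in>C. support_ratio j = N - 1" by simp
  then have "(\<Sum>j\<in>C. norm (a j)) = N - 1"
    using sum_support_ratio N_ge_2 by (simp add: N_def)
  then have "(\<Sum>j\<in>C. norm (a j) - a j \<bullet> j) = 0"
    using sum_inner_dual_vertex by (simp add: sum_subtractf)
  then have "\<forall>j\<in>C. norm (a j) - a j \<bullet> j = 0"
    using sum_nonneg_eq_0_iff[OF finite_vertices, of "\<lambda>j. norm (a j) - a j \<bullet> j"]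
      inner_dual_vertex_le_norm[OF sub] by simp
  then show ?thesis using ratio by simp
qed

lemma regular_inscribed_if_equal_inner:
  assumes "\<forall>x\<in>C. norm x = 1" "\<forall>x\<in>C. \<forall>y\<in>C. x \<noteq> y \<longrightarrow> x \<bullet> y = t"
  shows "regular_simplex (convex hull C) \<and> inscribed_in_ball (convex hull C)"
proof -
  have "dist x y = sqrt (2 - 2 * t)" if "x \<in> C" "y \<in> C" "x \<noteq> y" for x y
    using dist_unit_vectors_power2[of x y] assms that
    by (metis real_sqrt_unique zero_le_dist)
  then show ?thesis
    unfolding regular_simplex_def inscribed_in_ball_def simplex_vertices_eq
    using assms(1) by auto
qed

lemma regular_inscribed_if_absorption_index_eq:
  assumes sub: "C \<subseteq> cball 0 1" and eq: "absorption_index (cball 0 1) (convex hull C) = N - 1"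
  shows "regular_simplex (convex hull C) \<and> inscribed_in_ball (convex hull C)"
proof -
  note cond = equality_case_conditions[OF sub eq]
  have unit: "norm j = 1" and parallel: "a j = norm (a j) *\<^sub>R j" if "j \<in> C" for j
    using unit_if_inner_eq_norm[of j "a j"] cond sub dual_nonzero that by auto
  have norm_dual: "norm (a j) = (N - 1) / N" if "j \<in> C" for j
  proof -
    have "support_ratio j = N - 1" "a j \<bullet> j = norm (a j)" using cond that by auto
    then have "N - 1 = N * (norm (a j) + (1/N - 1 + norm (a j)))"
      using inner_dual_center[OF that] unfolding support_ratio_def by simp
    then have "N * norm (a j) = N - 1" using N_ge_2 by (simp add: algebra_simps)
    then show ?thesis using N_ge_2 by (simp add: field_simps)
  qed
  have "i \<bullet> j = 1 - N / (N - 1)" if "i \<in> C" "j \<in> C" "i \<noteq> j" for i j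
  proof -
    have "a j \<bullet> (i - j) = -1" using dual that unfolding dual_family_def by blast
    then have "norm (a j) * (j \<bullet> i - j \<bullet> j) = -1"
      by (subst (asm) parallel[OF that(2)]) (simp add: inner_diff_right right_diff_distrib)
    moreover have "j \<bullet> j = 1" using unit[OF that(2)] by (simp add: dot_square_norm)
    ultimately show ?thesis
      using norm_dual[OF that(2)] N_ge_2 by (simp add: field_simps inner_commute)
  qed
  then show ?thesis using regular_inscribed_if_equal_inner unit by blast
qed

lemma absorption_index_if_dual_parallel:
  assumes "\<forall>j\<in>C. norm j = 1" "\<forall>j\<in>C. a j = k *\<^sub>R j"
  shows "absorption_index (cball 0 1) (convex hull C) = N - 1"
proof -
  have jj: "j \<bullet> j = 1" if "j \<in> C" for j
    using assms(1) that by (simp add: dot_square_norm)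
  have "N * k = N - 1"
    using sum_inner_dual_vertex assms(2) jj unfolding N_def by simp
  then have k: "k = (N - 1) / N" using N_ge_2 by (simp add: field_simps)
  have "support_ratio j = N - 1" if "j \<in> C" for j
  proof -
    have "norm (a j) = k" "a j \<bullet> j = k" using assms that k N_ge_2 jj by auto
    then show ?thesis
      unfolding support_ratio_def using inner_dual_center[OF that] k N_ge_2
      by (simp add: field_simps)
  qed
  then have "support_ratio ` C = {N - 1}" using vertices_nonempty by auto
  then show ?thesis unfolding absorption_index_eq using N_ge_2 by simp
qed

end

lemma nondeg_simplex_frame:
  fixes S :: "'a::euclidean_space set"
  assumes "nondeg_simplex S"
  obtains C a where "simplex_frame C a" "S = convex hull C"
proof -
  obtain C where C: "\<not> affine_dependent C" "card C = DIM('a) + 1" "S = convex hull C"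
    using assms unfolding nondeg_simplex_def simplex_def by auto
  moreover obtain a where "dual_family C a" using dual_family_exists[OF C(1)] by blast
  ultimately show ?thesis using that simplex_frame.intro by blast
qed

lemma absorption_index_ball_ge:
  fixes S :: "'a::euclidean_space set"
  assumes "nondeg_simplex S" "S \<subseteq> cball 0 1"
  shows "absorption_index (cball 0 1) S \<ge> DIM('a)"
proof -
  obtain C a where frame: "simplex_frame C a" and S: "S = convex hull C"
    using nondeg_simplex_frame[OF assms(1)] by blast
  interpret simplex_frame C a by (fact frame)
  have "C \<subseteq> cball 0 1" using assms(2) S hull_subset[of C convex] by blast
  then show ?thesis
    using absorption_index_ge S unfolding N_def card_vertices by simp
qed

lemma absorption_index_ball_eq_iff:
  fixes S :: "'a::euclidean_space set"
  assumes "nondeg_simplex S" "S \<subseteq> cball 0 1"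
  shows "absorption_index (cball 0 1) S = DIM('a) \<longleftrightarrow> regular_simplex S \<and> inscribed_in_ball S"
proof -
  obtain C a where frame: "simplex_frame C a" and S: "S = convex hull C"
    using nondeg_simplex_frame[OF assms(1)] by blast
  interpret simplex_frame C a by (fact frame)
  have dim: "N - 1 = DIM('a)" unfolding N_def card_vertices by simp
  show ?thesis
  proof
    assume "absorption_index (cball 0 1) S = DIM('a)"
    moreover have "C \<subseteq> cball 0 1" using assms(2) S hull_subset[of C convex] by blast
    ultimately show "regular_simplex S \<and> inscribed_in_ball S"
      using regular_inscribed_if_absorption_index_eq S dim by simp
  next
    assume regular: "regular_simplex S \<and> inscribed_in_ball S"
    then obtain d where d: "\<forall>x\<in>C. \<forall>y\<in>C. x \<noteq> y \<longrightarrow> dist x y = d"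
      unfolding regular_simplex_def S simplex_vertices_eq by blast
    have unit: "\<forall>x\<in>C. norm x = 1"
      using regular unfolding inscribed_in_ball_def S simplex_vertices_eq by auto
    obtain j where j: "j \<in> C" using vertices_nonempty by blast
    then obtain i where "i \<in> C" "i \<noteq> j" by (rule other_vertex_exists)
    then have "d \<noteq> 0" using d j by (metis dist_eq_0_iff)
    define t where "t = 1 - d\<^sup>2 / 2"
    have inner: "\<forall>x\<in>C. \<forall>y\<in>C. x \<noteq> y \<longrightarrow> x \<bullet> y = t"
    proof (intro ballI impI)
      fix x y assume "x \<in> C" "y \<in> C" "x \<noteq> y"
      then show "x \<bullet> y = t"
        using dist_unit_vectors_power2[of x y] d unit unfolding t_def by (simp add: field_simps)
    qed
    have "t \<noteq> 1" using \<open>d \<noteq> 0\<close> unfolding t_def by simp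
    then interpret parallel: simplex_frame C "\<lambda>j. (1 / (1 - t)) *\<^sub>R j"
      by (intro simplex_frame.intro indep card_vertices dual_family_unit_vertices[OF unit inner])
    have "absorption_index (cball 0 1) S = parallel.N - 1"
      using parallel.absorption_index_if_dual_parallel[OF unit, of "1 / (1 - t)"] S by simp
    then show "absorption_index (cball 0 1) S = DIM('a)"
      using dim unfolding parallel.N_def N_def by simp
  qed
qed

text \<open>These are the conditions for \<open>z = \<gamma> One\<close> and \<open>w b = \<alpha> b + \<beta> One\<close>, \<open>b \<in> Basis\<close>, to be
  unit vectors with all mutual inner products \<open>-1/n\<close> in dimension \<open>n\<close>.\<close>
lemma regular_simplex_coefficients_exist:
  fixes n :: real
  assumes "n \<ge> 1"
  shows "\<exists>\<alpha> \<beta> \<gamma>. \<alpha>\<^sup>2 = 1 + 1/n \<and> 2 * \<alpha> * \<beta> + \<beta>\<^sup>2 * n = -1/n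
                 \<and> \<gamma> * (\<alpha> + \<beta> * n) = -1/n \<and> \<gamma>\<^sup>2 * n = 1"
proof (intro exI conjI)
  define q where "q = sqrt n"
  define \<alpha> where "\<alpha> = sqrt (1 + 1/n)"
  have q2: "q\<^sup>2 = n" and q_pos: "q > 0" unfolding q_def using assms by auto
  show \<alpha>2: "\<alpha>\<^sup>2 = 1 + 1/n" unfolding \<alpha>_def using assms by (simp add: add_nonneg_nonneg)
  have "2 * \<alpha> * ((1/q - \<alpha>) / n) + ((1/q - \<alpha>) / n)\<^sup>2 * n = (1/q - \<alpha>) * (1/q + \<alpha>) / n"
    using assms by (simp add: power2_eq_square field_simps)
  also have "\<dots> = (1/q\<^sup>2 - \<alpha>\<^sup>2) / n" by (simp add: power2_eq_square algebra_simps)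
  also have "\<dots> = -1/n" using q2 \<alpha>2 by simp
  finally show "2 * \<alpha> * ((1/q - \<alpha>) / n) + ((1/q - \<alpha>) / n)\<^sup>2 * n = -1/n" .
  show "(-1/q) * (\<alpha> + (1/q - \<alpha>) / n * n) = -1/n"
    using assms q2 q_pos by (simp add: field_simps power2_eq_square)
  show "(-1/q)\<^sup>2 * n = 1"
    using assms q2 q_pos by (simp add: power2_eq_square)
qed

lemma equal_inner_unit_vectors_exist:
  "\<exists>V::'a::euclidean_space set. finite V \<and> card V = DIM('a) + 1 \<and> (\<forall>x\<in>V. norm x = 1)
     \<and> (\<forall>x\<in>V. \<forall>y\<in>V. x \<noteq> y \<longrightarrow> x \<bullet> y = -1 / DIM('a))"
proof -
  define n where "n = real DIM('a)"
  have "n \<ge> 1" unfolding n_def by (simp add: DIM_positive Suc_leI)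
  then obtain \<alpha> \<beta> \<gamma> where \<alpha>2: "\<alpha>\<^sup>2 = 1 + 1/n" and cross: "2 * \<alpha> * \<beta> + \<beta>\<^sup>2 * n = -1/n"
      and \<gamma>: "\<gamma> * (\<alpha> + \<beta> * n) = -1/n" "\<gamma>\<^sup>2 * n = 1"
    using regular_simplex_coefficients_exist by blast
  define w where "w b = \<alpha> *\<^sub>R b + \<beta> *\<^sub>R (One::'a)" for b
  define z where "z = \<gamma> *\<^sub>R (One::'a)"
  have Basis_One: "b \<bullet> (One::'a) = 1" if "b \<in> Basis" for b
    using inner_sum_Basis[OF that] by (simp only: inner_commute)
  have One_One: "One \<bullet> (One::'a) = n"
    unfolding n_def by (simp add: inner_sum_left Basis_One cong: sum.cong_simp)
  have ww: "w b \<bullet> w b' = (if b = b' then \<alpha>\<^sup>2 else 0) + (2 * \<alpha> * \<beta> + \<beta>\<^sup>2 * n)"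
    if "b \<in> Basis" "b' \<in> Basis" for b b'
    unfolding w_def using that One_One Basis_One
    by (simp add: inner_add_left inner_add_right inner_Basis power2_eq_square algebra_simps)
  have ww_eq: "w b \<bullet> w b = 1" if "b \<in> Basis" for b
    using ww[OF that that] \<alpha>2 cross by simp
  have ww_neq: "w b \<bullet> w b' = -1/n" if "b \<in> Basis" "b' \<in> Basis" "b \<noteq> b'" for b b'
    using ww[OF that(1,2)] that(3) cross by simp
  have wz: "w b \<bullet> z = -1/n" if "b \<in> Basis" for b
    using that One_One Basis_One \<gamma>(1) unfolding w_def z_def
    by (simp add: inner_add_left algebra_simps)
  have zz: "z \<bullet> z = 1"
    using One_One \<gamma>(2) unfolding z_def by (simp add: power2_eq_square algebra_simps)
  have "-1/n \<noteq> 1" using \<open>n \<ge> 1\<close> by (simp add: field_simps)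
  then have inj: "inj_on w Basis" using ww_eq ww_neq by (metis inj_onI)
  have z_notin: "z \<notin> w ` Basis"
  proof
    assume "z \<in> w ` Basis"
    then have "z \<bullet> z = -1/n" using wz by auto
    then show False using zz \<open>-1/n \<noteq> 1\<close> by simp
  qed
  define V where "V = insert z (w ` Basis)"
  show ?thesis
  proof (intro exI[of _ V] conjI)
    show "finite V" unfolding V_def by simp
    show "card V = DIM('a) + 1" unfolding V_def using z_notin card_image[OF inj] by simp
    show "\<forall>x\<in>V. norm x = 1" unfolding V_def using zz ww_eq by (auto simp: norm_eq_sqrt_inner)
    show "\<forall>x\<in>V. \<forall>y\<in>V. x \<noteq> y \<longrightarrow> x \<bullet> y = -1 / DIM('a)"
      unfolding V_def n_def[symmetric] using wz ww_neq by (auto simp: inner_commute)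
  qed
qed

lemma regular_inscribed_simplex_exists:
  "\<exists>S::'a::euclidean_space set. nondeg_simplex S \<and> S \<subseteq> cball 0 1
     \<and> regular_simplex S \<and> inscribed_in_ball S"
proof -
  obtain V :: "'a set" where V: "finite V" "card V = DIM('a) + 1" "\<forall>x\<in>V. norm x = 1"
      "\<forall>x\<in>V. \<forall>y\<in>V. x \<noteq> y \<longrightarrow> x \<bullet> y = -1 / DIM('a)"
    using equal_inner_unit_vectors_exist by blast
  have "-1 / real DIM('a) \<noteq> 1" by (simp add: field_simps)
  then have dual: "dual_family V (\<lambda>j. (1 / (1 + 1 / DIM('a))) *\<^sub>R j)"
    using dual_family_unit_vertices[OF V(3,4)] by simp
  have indep: "\<not> affine_dependent V" using dual_family_imp_affine_independent[OF V(1) dual] .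
  interpret simplex_frame V "\<lambda>j. (1 / (1 + 1 / DIM('a))) *\<^sub>R j"
    using indep V(2) dual by unfold_locales
  have "nondeg_simplex (convex hull V)"
    unfolding nondeg_simplex_def simplex_def using indep V(2) by auto
  moreover have "convex hull V \<subseteq> cball 0 1"
    using V(3) by (intro hull_minimal) (auto simp: convex_cball)
  ultimately show ?thesis using regular_inscribed_if_equal_inner[OF V(3,4)] by blast
qed

theorem theorem10p4:
  shows "(\<forall>S :: 'a::euclidean_space set. nondeg_simplex S \<and> S \<subseteq> cball 0 1 \<longrightarrow>
            absorption_index (cball 0 1) S \<ge> real DIM('a)
            \<and> (absorption_index (cball 0 1) S = real DIM('a)
                 \<longleftrightarrow> regular_simplex S \<and> inscribed_in_ball S))
      \<and> xi_n_ball TYPE('a) = real DIM('a)"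
proof
  show bounds: "\<forall>S :: 'a set. nondeg_simplex S \<and> S \<subseteq> cball 0 1 \<longrightarrow>
            absorption_index (cball 0 1) S \<ge> real DIM('a)
            \<and> (absorption_index (cball 0 1) S = real DIM('a)
                 \<longleftrightarrow> regular_simplex S \<and> inscribed_in_ball S)"
    using absorption_index_ball_ge absorption_index_ball_eq_iff by blast
  obtain S :: "'a set" where S: "nondeg_simplex S" "S \<subseteq> cball 0 1"
      "regular_simplex S" "inscribed_in_ball S"
    using regular_inscribed_simplex_exists by blast
  show "xi_n_ball TYPE('a) = real DIM('a)"
    unfolding xi_n_ball_def
  proof (rule cInf_eq_minimum)
    show "real DIM('a) \<in> {absorption_index (cball (0::'a) 1) S |S. nondeg_simplex S \<and> S \<subseteq> cball 0 1}"
      using S absorption_index_ball_eq_iff[OF S(1,2)] by force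
  qed (use bounds in force)
qed

end
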